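(* Consider the optimization problem $\mathbf{P}_{\rm SICD}$ over the variables $\boldsymbol{\tau}_0=(\tau_{0,t})_{t=1}^T$ and $\mathbf{E}=(E_{i,t})_{1\le i\le K,\,1\le t\le T}$: maximize $\displaystyle\sum_{t=1}^{T}\sum_{i=1}^{K}(1-\tau_{0,t})\log_2(1+x_{i,t})$, where $x_{i,t}=\dfrac{g_{i,t}E_{i,t}}{\sigma^2(1-\tau_{0,t})+\sum_{j=i+1}^{K}g_{j,t}E_{j,t}}$ (empty sums are $0$), subject to (i) $\sum_{n=1}^{t}E_{i,n}\le\sum_{n=1}^{t}\gamma_{i,n}\tau_{0,n}$ for all $i,t$; (ii) $x_{i,t}\ge S_i^{\rm th}$ for all $i,t$, understood in the form $g_{i,t}E_{i,t}\ge S_i^{\rm th}\big(\sigma^2(1-\tau_{0,t})+\sum_{j=i+1}^{K}g_{j,t}E_{j,t}\big)$; (iii) $0\le\tau_{0,t}\le1$ for all $t$; (iv) $E_{i,t}\ge0$ for all $i,t$. Then $\mathbf{P}_{\rm SICD}$ is a convex optimization problem: its objective is a concave function of $(\boldsymbol{\tau}_0,\mathbf{E})$ and its feasible set is convex.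
   Context: There are $K$ users and a horizon of $T$ time slots of unit length. In slot $t$, a fraction $\tau_{0,t}$ is used for downlink wireless energy transfer and the remaining $1-\tau_{0,t}$ for simultaneous uplink transmission. $g_{i,t}>0$ is the uplink channel power gain of user $i$ in slot $t$, $\sigma^2>0$ the noise power, $\gamma_{i,t}=\eta_i h_{i,t}P_B>0$ the harvested power of user $i$ in slot $t$ (harvested energy $\gamma_{i,t}\tau_{0,t}$), $E_{i,t}$ the energy consumed by user $i$ in slot $t$, and $S_i^{\rm th}$ given decodability thresholds. $x_{i,t}$ is the SINR of user $i$ under successive interference cancellation in the fixed decoding order $1,\dots,K$. For $\tau_{0,t}=1$ the slot-$t$ term of the objective is taken to be $0$ (its limiting value). *)

theory Defs
  imports "HOL-Analysis.Analysis"
begin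

text \<open>Decision variables: tau0 :: nat => real (slot t = 1..T) and
  E :: nat => nat => real (E i t, user i = 1..K, slot t = 1..T).\<close>

type_synonym decision = "(nat \<Rightarrow> real) \<times> (nat \<Rightarrow> nat \<Rightarrow> real)"

definition mix :: "real \<Rightarrow> decision \<Rightarrow> decision \<Rightarrow> decision" where
  "mix \<theta> u v =
     ((\<lambda>t. \<theta> * fst u t + (1 - \<theta>) * fst v t),
      (\<lambda>i t. \<theta> * snd u i t + (1 - \<theta>) * snd v i t))"

definition convex_dec :: "decision set \<Rightarrow> bool" where
  "convex_dec S \<longleftrightarrow> (\<forall>u\<in>S. \<forall>v\<in>S. \<forall>\<theta>::real. 0 \<le> \<theta> \<and> \<theta> \<le> 1 \<longrightarrow> mix \<theta> u v \<in> S)"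

definition concave_dec :: "decision set \<Rightarrow> (decision \<Rightarrow> real) \<Rightarrow> bool" where
  "concave_dec S f \<longleftrightarrow> (\<forall>u\<in>S. \<forall>v\<in>S. \<forall>\<theta>::real. 0 \<le> \<theta> \<and> \<theta> \<le> 1 \<longrightarrow>
      \<theta> * f u + (1 - \<theta>) * f v \<le> f (mix \<theta> u v))"

definition interf :: "nat \<Rightarrow> (nat \<Rightarrow> nat \<Rightarrow> real) \<Rightarrow> real \<Rightarrow> decision \<Rightarrow> nat \<Rightarrow> nat \<Rightarrow> real" where
  "interf K g \<sigma>2 d i t = \<sigma>2 * (1 - fst d t) + (\<Sum>j\<in>{i+1..K}. g j t * snd d j t)"

definition sinr :: "nat \<Rightarrow> (nat \<Rightarrow> nat \<Rightarrow> real) \<Rightarrow> real \<Rightarrow> decision \<Rightarrow> nat \<Rightarrow> nat \<Rightarrow> real" where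
  "sinr K g \<sigma>2 d i t = g i t * snd d i t / interf K g \<sigma>2 d i t"

definition slot_term :: "nat \<Rightarrow> (nat \<Rightarrow> nat \<Rightarrow> real) \<Rightarrow> real \<Rightarrow> decision \<Rightarrow> nat \<Rightarrow> real" where
  "slot_term K g \<sigma>2 d t =
     (if fst d t = 1 then 0
      else (\<Sum>i=1..K. (1 - fst d t) * log 2 (1 + sinr K g \<sigma>2 d i t)))"

definition objective :: "nat \<Rightarrow> nat \<Rightarrow> (nat \<Rightarrow> nat \<Rightarrow> real) \<Rightarrow> real \<Rightarrow> decision \<Rightarrow> real" where
  "objective K T g \<sigma>2 d = (\<Sum>t=1..T. slot_term K g \<sigma>2 d t)"

definition box_set :: "nat \<Rightarrow> nat \<Rightarrow> decision set" where
  "box_set K T = {d. (\<forall>t\<in>{1..T}. 0 \<le> fst d t \<and> fst d t \<le> 1) \<and>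
                     (\<forall>i\<in>{1..K}. \<forall>t\<in>{1..T}. 0 \<le> snd d i t)}"

definition feasible_set ::
  "nat \<Rightarrow> nat \<Rightarrow> (nat \<Rightarrow> nat \<Rightarrow> real) \<Rightarrow> real \<Rightarrow> (nat \<Rightarrow> nat \<Rightarrow> real) \<Rightarrow> (nat \<Rightarrow> real) \<Rightarrow> decision set" where
  "feasible_set K T g \<sigma>2 \<gamma> S = {d.
     (\<forall>i\<in>{1..K}. \<forall>t\<in>{1..T}. (\<Sum>n=1..t. snd d i n) \<le> (\<Sum>n=1..t. \<gamma> i n * fst d n)) \<and>
     (\<forall>i\<in>{1..K}. \<forall>t\<in>{1..T}. g i t * snd d i t \<ge> S i * interf K g \<sigma>2 d i t) \<and>
     (\<forall>t\<in>{1..T}. 0 \<le> fst d t \<and> fst d t \<le> 1) \<and>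
     (\<forall>i\<in>{1..K}. \<forall>t\<in>{1..T}. 0 \<le> snd d i t)}"

end

theory Submission
  imports Defs
begin

text \<open>Under successive interference cancellation the interference-plus-noise levels telescope:
  \<open>1 + x(i,t)\<close> is the ratio of the levels seen by users \<open>i - 1\<close> and \<open>i\<close>, so the rate of slot
  \<open>t\<close> collapses to \<open>(1 - \<tau>) log 2 (1 + A / (\<sigma>2 * (1 - \<tau>)))\<close> with \<open>A = \<Sum>j. g j t * E j t\<close>.
  This is the perspective of the concave increasing function \<open>a \<mapsto> log 2 (1 + a / \<sigma>2)\<close>
  applied to quantities affine in the decision, hence jointly concave. Once (ii) is multiplied
  out, all constraints are linear inequalities, so the feasible set is convex.\<close>

text \<open>The value \<open>0\<close> at \<open>s = 0\<close> matches the convention for \<open>\<tau> = 1\<close>; it keeps the perspective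
  concave on the closed quadrant only because \<open>f\<close> is assumed monotone there.\<close>

definition perspective :: "(real \<Rightarrow> real) \<Rightarrow> real \<Rightarrow> real \<Rightarrow> real" where
  "perspective f s a = (if s = 0 then 0 else s * f (a / s))"

lemma perspective_scale:
  assumes "k \<ge> 0"
  shows "perspective f (k * s) (k * a) = k * perspective f s a"
  using assms by (simp add: perspective_def)

lemma perspective_mono:
  assumes "mono_on {0..} f" "s \<ge> 0" "0 \<le> a" "a \<le> b"
  shows "perspective f s a \<le> perspective f s b"
  using assms by (auto simp: perspective_def divide_right_mono mono_onD intro!: mult_left_mono)

lemma perspective_convex_comb_zero:
  assumes "mono_on {0..} f" "s \<ge> 0" "a1 \<ge> 0" "a2 \<ge> 0" "0 \<le> \<theta>" "\<theta> \<le> 1"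
  shows "\<theta> * perspective f 0 a1 + (1 - \<theta>) * perspective f s a2
         \<le> perspective f ((1 - \<theta>) * s) (\<theta> * a1 + (1 - \<theta>) * a2)"
proof -
  have "\<theta> * perspective f 0 a1 + (1 - \<theta>) * perspective f s a2 = perspective f ((1 - \<theta>) * s) ((1 - \<theta>) * a2)"
    using assms by (simp add: perspective_scale perspective_def)
  also have "\<dots> \<le> perspective f ((1 - \<theta>) * s) (\<theta> * a1 + (1 - \<theta>) * a2)"
    using assms by (intro perspective_mono) auto
  finally show ?thesis .
qed

lemma perspective_convex_comb_pos:
  assumes f: "concave_on {0..} f" and "s1 > 0" "s2 > 0" "a1 \<ge> 0" "a2 \<ge> 0" "0 \<le> \<theta>" "\<theta> \<le> 1"
  shows "\<theta> * perspective f s1 a1 + (1 - \<theta>) * perspective f s2 a2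
         \<le> perspective f (\<theta> * s1 + (1 - \<theta>) * s2) (\<theta> * a1 + (1 - \<theta>) * a2)"
proof -
  define s where "s = \<theta> * s1 + (1 - \<theta>) * s2"
  have "s > 0"
    unfolding s_def using assms by (cases "\<theta> = 0") (auto intro: add_pos_nonneg)
  define \<mu> where "\<mu> = (1 - \<theta>) * s2 / s"
  have "0 \<le> \<mu>" "\<mu> \<le> 1"
    using assms \<open>s > 0\<close> by (auto simp: \<mu>_def s_def)
  have one_minus_\<mu>: "1 - \<mu> = \<theta> * s1 / s"
    using \<open>s > 0\<close> by (simp add: \<mu>_def s_def field_simps)
  have "s * (1 - \<mu>) = \<theta> * s1" "s * \<mu> = (1 - \<theta>) * s2"
    using \<open>s > 0\<close> unfolding one_minus_\<mu> by (simp_all add: \<mu>_def)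
  then have "\<theta> * perspective f s1 a1 + (1 - \<theta>) * perspective f s2 a2
        = s * ((1 - \<mu>) * f (a1 / s1) + \<mu> * f (a2 / s2))"
    using assms by (simp add: perspective_def distrib_left flip: mult.assoc)
  also have "\<dots> \<le> s * f ((1 - \<mu>) * (a1 / s1) + \<mu> * (a2 / s2))"
    using concave_onD[OF f, of \<mu> "a1 / s1" "a2 / s2"] assms \<open>0 \<le> \<mu>\<close> \<open>\<mu> \<le> 1\<close> \<open>s > 0\<close>
    by simp
  also have "(1 - \<mu>) * (a1 / s1) + \<mu> * (a2 / s2) = (\<theta> * a1 + (1 - \<theta>) * a2) / s"
    using assms \<open>s > 0\<close> unfolding one_minus_\<mu> by (simp add: \<mu>_def field_simps)
  finally show ?thesis
    using \<open>s > 0\<close> by (simp add: perspective_def s_def)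
qed

lemma concave_on_perspective:
  assumes "concave_on {0..} f" "mono_on {0..} f"
  shows "concave_on ({0..} \<times> {0..}) (\<lambda>(s, a). perspective f s a)"
  unfolding concave_on_iff
proof (intro conjI convex_Times convex_real_interval ballI allI impI)
  fix x y :: "real \<times> real" and u v :: real
  assume x: "x \<in> {0..} \<times> {0..}" and y: "y \<in> {0..} \<times> {0..}" and "0 \<le> u" "0 \<le> v" "u + v = 1"
  obtain s1 a1 s2 a2 where xy: "x = (s1, a1)" "y = (s2, a2)" by fastforce
  have nonneg: "s1 \<ge> 0" "a1 \<ge> 0" "s2 \<ge> 0" "a2 \<ge> 0" "0 \<le> u" "u \<le> 1"
    using x y xy \<open>0 \<le> u\<close> \<open>0 \<le> v\<close> \<open>u + v = 1\<close> by auto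
  have "u * perspective f s1 a1 + (1 - u) * perspective f s2 a2
        \<le> perspective f (u * s1 + (1 - u) * s2) (u * a1 + (1 - u) * a2)"
  proof (cases "s1 = 0 \<or> s2 = 0")
    case True
    then show ?thesis
      using perspective_convex_comb_zero[OF assms(2) nonneg(3,2,4,5,6)]
        perspective_convex_comb_zero[OF assms(2) nonneg(1,4,2), of "1 - u"] nonneg
      by (auto simp: algebra_simps)
  next
    case False
    then show ?thesis
      using perspective_convex_comb_pos[OF assms(1)] nonneg by simp
  qed
  moreover have "v = 1 - u"
    using \<open>u + v = 1\<close> by simp
  ultimately show "u * (case x of (s, a) \<Rightarrow> perspective f s a) + v * (case y of (s, a) \<Rightarrow> perspective f s a)
        \<le> (case u *\<^sub>R x + v *\<^sub>R y of (s, a) \<Rightarrow> perspective f s a)"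
    using xy by simp
qed

lemma concave_on_log_one_plus_div:
  assumes "c > 0"
  shows "concave_on {0..} (\<lambda>x. log 2 (1 + x / c))"
  unfolding concave_on_iff
proof (intro conjI convex_real_interval ballI allI impI)
  fix x y u v :: real
  assume "x \<in> {0..}" "y \<in> {0..}" "0 \<le> u" "0 \<le> v" "u + v = 1"
  then have pos: "1 + x / c > 0" "1 + y / c > 0"
    using assms by (simp_all add: add_pos_nonneg)
  have "1 + (u *\<^sub>R x + v *\<^sub>R y) / c = u *\<^sub>R (1 + x / c) + v *\<^sub>R (1 + y / c)"
    using \<open>u + v = 1\<close> by (simp add: add_divide_distrib algebra_simps)
  then show "u * log 2 (1 + x / c) + v * log 2 (1 + y / c) \<le> log 2 (1 + (u *\<^sub>R x + v *\<^sub>R y) / c)"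
    using log_concave[of 2] pos \<open>0 \<le> u\<close> \<open>0 \<le> v\<close> \<open>u + v = 1\<close>
    unfolding concave_on_iff by simp
qed

lemma mono_on_log_one_plus_div:
  assumes "c > 0"
  shows "mono_on {0..} (\<lambda>x. log 2 (1 + x / c))"
  using assms by (intro mono_onI) (simp add: add_pos_nonneg divide_right_mono)

lemma interf_Suc:
  assumes "i < K"
  shows "interf K g \<sigma>2 d i t = g (Suc i) t * snd d (Suc i) t + interf K g \<sigma>2 d (Suc i) t"
  using assms by (simp add: interf_def sum.atLeast_Suc_atMost)

lemma interf_pos:
  assumes "\<sigma>2 > 0" "fst d t < 1" "\<forall>j\<in>{1..K}. 0 \<le> g j t * snd d j t"
  shows "interf K g \<sigma>2 d i t > 0"
proof -
  have "0 \<le> (\<Sum>j\<in>{i+1..K}. g j t * snd d j t)"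
    using assms(3) by (intro sum_nonneg) auto
  then show ?thesis
    using assms(1,2) by (simp add: interf_def add_pos_nonneg)
qed

lemma sum_log_one_plus_sinr:
  assumes "\<sigma>2 > 0" "fst d t < 1" "\<forall>j\<in>{1..K}. 0 \<le> g j t * snd d j t"
  shows "(\<Sum>i=1..K. log 2 (1 + sinr K g \<sigma>2 d i t))
         = log 2 (interf K g \<sigma>2 d 0 t / interf K g \<sigma>2 d K t)"
proof -
  let ?L = "\<lambda>i. log 2 (interf K g \<sigma>2 d i t)"
  have pos: "interf K g \<sigma>2 d i t > 0" for i
    using interf_pos[of \<sigma>2 d t K g] assms by blast
  have "log 2 (1 + sinr K g \<sigma>2 d (Suc i) t) = ?L i - ?L (Suc i)" if "i < K" for i
  proof -
    have "1 + sinr K g \<sigma>2 d (Suc i) t = interf K g \<sigma>2 d i t / interf K g \<sigma>2 d (Suc i) t"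
      using pos[of "Suc i"] by (simp add: interf_Suc[OF that] sinr_def field_simps)
    then show ?thesis
      using pos[of i] pos[of "Suc i"] by (simp add: log_divide)
  qed
  then have "(\<Sum>i=1..K. log 2 (1 + sinr K g \<sigma>2 d i t)) = (\<Sum>i<K. ?L i - ?L (Suc i))"
    by (simp add: sum.atLeast1_atMost_eq)
  also have "\<dots> = ?L 0 - ?L K"
    by (rule sum_lessThan_telescope')
  finally show ?thesis
    using pos[of 0] pos[of K] by (simp add: log_divide)
qed

lemma slot_term_eq_perspective:
  assumes "\<sigma>2 > 0" "fst d t \<le> 1" "\<forall>j\<in>{1..K}. 0 \<le> g j t * snd d j t"
  shows "slot_term K g \<sigma>2 d t
         = perspective (\<lambda>x. log 2 (1 + x / \<sigma>2)) (1 - fst d t) (\<Sum>j=1..K. g j t * snd d j t)"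
proof (cases "fst d t = 1")
  case True
  then show ?thesis by (simp add: slot_term_def perspective_def)
next
  case False
  then have "fst d t < 1" using assms(2) by simp
  have "interf K g \<sigma>2 d 0 t / interf K g \<sigma>2 d K t
        = 1 + (\<Sum>j=1..K. g j t * snd d j t) / (1 - fst d t) / \<sigma>2"
    using assms(1) \<open>fst d t < 1\<close> by (simp add: interf_def field_simps)
  then show ?thesis
    using sum_log_one_plus_sinr[of \<sigma>2 d t K g] assms \<open>fst d t < 1\<close> False
    by (simp add: slot_term_def perspective_def sum_distrib_left[symmetric])
qed

lemma fst_mix: "fst (mix \<theta> u v) t = \<theta> * fst u t + (1 - \<theta>) * fst v t"
  by (simp add: mix_def)

lemma sum_weighted_mix:
  "(\<Sum>j\<in>A. c j * snd (mix \<theta> u v) j t)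
   = \<theta> * (\<Sum>j\<in>A. c j * snd u j t) + (1 - \<theta>) * (\<Sum>j\<in>A. c j * snd v j t)"
  by (simp add: mix_def sum_distrib_left sum.distrib[symmetric] algebra_simps)

lemma interf_mix:
  "interf K g \<sigma>2 (mix \<theta> u v) i t
   = \<theta> * interf K g \<sigma>2 u i t + (1 - \<theta>) * interf K g \<sigma>2 v i t"
  by (simp add: interf_def fst_mix sum_weighted_mix algebra_simps)

lemma convex_comb_le:
  fixes a b c d \<theta> :: real
  assumes "a \<le> b" "c \<le> d" "0 \<le> \<theta>" "\<theta> \<le> 1"
  shows "\<theta> * a + (1 - \<theta>) * c \<le> \<theta> * b + (1 - \<theta>) * d"
  using assms by (intro add_mono mult_left_mono) auto

lemma mix_in_box_set:
  assumes "u \<in> box_set K T" "v \<in> box_set K T" "0 \<le> \<theta>" "\<theta> \<le> 1"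
  shows "mix \<theta> u v \<in> box_set K T"
  using assms unfolding box_set_def mix_def
  by (auto intro!: add_nonneg_nonneg mult_nonneg_nonneg convex_bound_le)

lemma convex_feasible_set: "convex_dec (feasible_set K T g \<sigma>2 \<gamma> S)"
  unfolding convex_dec_def
proof (intro ballI allI impI)
  fix u v and \<theta> :: real
  assume u: "u \<in> feasible_set K T g \<sigma>2 \<gamma> S" and v: "v \<in> feasible_set K T g \<sigma>2 \<gamma> S"
    and \<theta>: "0 \<le> \<theta> \<and> \<theta> \<le> 1"
  let ?m = "mix \<theta> u v"
  have energy: "(\<Sum>n=1..t. snd ?m i n) \<le> (\<Sum>n=1..t. \<gamma> i n * fst ?m n)"
    if "i \<in> {1..K}" "t \<in> {1..T}" for i t
  proof -
    have "(\<Sum>n=1..t. snd ?m i n) = \<theta> * (\<Sum>n=1..t. snd u i n) + (1 - \<theta>) * (\<Sum>n=1..t. snd v i n)"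
      by (simp add: mix_def sum_distrib_left sum.distrib)
    also have "\<dots> \<le> \<theta> * (\<Sum>n=1..t. \<gamma> i n * fst u n) + (1 - \<theta>) * (\<Sum>n=1..t. \<gamma> i n * fst v n)"
      using u v that \<theta> by (intro convex_comb_le) (auto simp: feasible_set_def)
    also have "\<dots> = (\<Sum>n=1..t. \<gamma> i n * fst ?m n)"
      by (simp add: fst_mix sum_distrib_left sum.distrib[symmetric] algebra_simps)
    finally show ?thesis .
  qed
  have sinr: "S i * interf K g \<sigma>2 ?m i t \<le> g i t * snd ?m i t"
    if "i \<in> {1..K}" "t \<in> {1..T}" for i t
  proof -
    have "S i * interf K g \<sigma>2 ?m i t
          = \<theta> * (S i * interf K g \<sigma>2 u i t) + (1 - \<theta>) * (S i * interf K g \<sigma>2 v i t)"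
      by (simp add: interf_mix algebra_simps)
    also have "\<dots> \<le> \<theta> * (g i t * snd u i t) + (1 - \<theta>) * (g i t * snd v i t)"
      using u v that \<theta> by (intro convex_comb_le) (auto simp: feasible_set_def)
    also have "\<dots> = g i t * snd ?m i t"
      by (simp add: mix_def algebra_simps)
    finally show ?thesis .
  qed
  have "?m \<in> box_set K T"
    using u v \<theta> by (intro mix_in_box_set) (auto simp: feasible_set_def box_set_def)
  with energy sinr show "?m \<in> feasible_set K T g \<sigma>2 \<gamma> S"
    unfolding feasible_set_def box_set_def by blast
qed

lemma concave_objective:
  assumes g_nonneg: "\<forall>i\<in>{1..K}. \<forall>t\<in>{1..T}. g i t \<ge> 0" and "\<sigma>2 > 0"
  shows "concave_dec (box_set K T) (objective K T g \<sigma>2)"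
  unfolding concave_dec_def
proof (intro ballI allI impI)
  fix u v and \<theta> :: real
  assume u: "u \<in> box_set K T" and v: "v \<in> box_set K T" and \<theta>: "0 \<le> \<theta> \<and> \<theta> \<le> 1"
  define f where "f x = log 2 (1 + x / \<sigma>2)" for x
  define P where "P d t = perspective f (1 - fst d t) (\<Sum>j=1..K. g j t * snd d j t)" for d t
  have objective_eq: "objective K T g \<sigma>2 d = (\<Sum>t=1..T. P d t)" if "d \<in> box_set K T" for d
    unfolding objective_def P_def f_def
    using that g_nonneg \<open>\<sigma>2 > 0\<close>
    by (intro sum.cong refl slot_term_eq_perspective) (auto simp: box_set_def)
  have concave: "concave_on ({0..} \<times> {0..}) (\<lambda>(s, a). perspective f s a)"
    unfolding f_def using \<open>\<sigma>2 > 0\<close>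
    by (intro concave_on_perspective concave_on_log_one_plus_div mono_on_log_one_plus_div)
  have slot_concave: "\<theta> * P u t + (1 - \<theta>) * P v t \<le> P (mix \<theta> u v) t" if "t \<in> {1..T}" for t
  proof -
    let ?x = "(1 - fst u t, \<Sum>j=1..K. g j t * snd u j t)"
    let ?y = "(1 - fst v t, \<Sum>j=1..K. g j t * snd v j t)"
    have "?x \<in> {0..} \<times> {0..}" "?y \<in> {0..} \<times> {0..}"
      using u v that g_nonneg by (auto simp: box_set_def intro!: sum_nonneg)
    then have "\<theta> * P u t + (1 - \<theta>) * P v t \<le> (\<lambda>(s, a). perspective f s a) (\<theta> *\<^sub>R ?x + (1 - \<theta>) *\<^sub>R ?y)"
      using concave \<theta> unfolding concave_on_iff P_def by simp
    also have "\<dots> = P (mix \<theta> u v) t"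
      by (simp add: P_def fst_mix sum_weighted_mix algebra_simps)
    finally show ?thesis .
  qed
  have "\<theta> * objective K T g \<sigma>2 u + (1 - \<theta>) * objective K T g \<sigma>2 v
        = (\<Sum>t=1..T. \<theta> * P u t + (1 - \<theta>) * P v t)"
    by (simp add: objective_eq u v sum_distrib_left sum.distrib)
  also have "\<dots> \<le> (\<Sum>t=1..T. P (mix \<theta> u v) t)"
    by (intro sum_mono slot_concave)
  also have "\<dots> = objective K T g \<sigma>2 (mix \<theta> u v)"
    using objective_eq mix_in_box_set u v \<theta> by simp
  finally show "\<theta> * objective K T g \<sigma>2 u + (1 - \<theta>) * objective K T g \<sigma>2 v
                \<le> objective K T g \<sigma>2 (mix \<theta> u v)" .
qed

theorem theorem1:
  fixes K T :: nat and g \<gamma> :: "nat \<Rightarrow> nat \<Rightarrow> real" and \<sigma>2 :: real and S :: "nat \<Rightarrow> real"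
  assumes g_pos: "\<forall>i\<in>{1..K}. \<forall>t\<in>{1..T}. g i t > 0"
    and sigma_pos: "\<sigma>2 > 0"
    and gamma_pos: "\<forall>i\<in>{1..K}. \<forall>t\<in>{1..T}. \<gamma> i t > 0"
  shows "concave_dec (box_set K T) (objective K T g \<sigma>2)
         \<and> convex_dec (feasible_set K T g \<sigma>2 \<gamma> S)"
  using concave_objective[of K T g \<sigma>2] convex_feasible_set g_pos sigma_pos
  by (simp add: less_imp_le)

end
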